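(* Let $n\in\mathbb{Z}$, let $\beta:\mathbb{Z}\to\mathbb{C}$ have convergent increments, and let $d:\mathcal{A}\to A$ be the $n$-covariant derivation $d(a)=[U^n\beta(\mathbb{K}),a]$. Then $d$ is approximately inner if and only if $\beta(k+1)-\beta(k)\to0$ as $k\to\pm\infty$.
   Context: Let $\{E_k\}$ be the canonical basis of $\ell^2(\mathbb{Z})$, $UE_k=E_{k+1}$, $\mathbb{K}E_k=kE_k$, $a(\mathbb{K})E_k=a(k)E_k$. $A$ is the C$^*$-algebra generated by $U$ and all $a(\mathbb{K})$ with $a$ having finite limits at $\pm\infty$; $\mathcal{A}$ is the algebra of finite sums $\sum_mU^ma_m(\mathbb{K})$ with each $a_m$ eventually constant (constant on $k\ge k_0$ and on $k\le-k_0$ for some $k_0$). A function $\beta$ has convergent increments if $k\mapsto\beta(k)-\beta(k-1)$ has finite limits as $k\to\pm\infty$ (this guarantees $d$ maps $\mathcal{A}$ into $A$). A derivation $d:\mathcal{A}\to A$ is approximately inner if there are $x_j\in A$ with $d(a)=\lim_j[x_j,a]$ in norm for all $a\in\mathcal{A}$. *)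

theory Defs
  imports "HOL-Analysis.Analysis"
begin

text \<open>Operators on ell2(Z) are represented by their matrices with respect to the
canonical basis: M i j = inner product of E_i with M E_j.\<close>

type_synonym op = "int \<Rightarrow> int \<Rightarrow> complex"

definition op_add :: "op \<Rightarrow> op \<Rightarrow> op" where
  "op_add M N = (\<lambda>i j. M i j + N i j)"

definition op_diff :: "op \<Rightarrow> op \<Rightarrow> op" where
  "op_diff M N = (\<lambda>i j. M i j - N i j)"

definition op_scale :: "complex \<Rightarrow> op \<Rightarrow> op" where
  "op_scale c M = (\<lambda>i j. c * M i j)"

definition op_mult :: "op \<Rightarrow> op \<Rightarrow> op" where
  "op_mult M N = (\<lambda>i j. infsum (\<lambda>k. M i k * N k j) UNIV)"

definition op_adj :: "op \<Rightarrow> op" where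
  "op_adj M = (\<lambda>i j. cnj (M j i))"

definition op_comm :: "op \<Rightarrow> op \<Rightarrow> op" where
  "op_comm M N = op_diff (op_mult M N) (op_mult N M)"

definition shift :: "int \<Rightarrow> op" where
  "shift m = (\<lambda>i j. if i = j + m then 1 else 0)"

definition diag :: "(int \<Rightarrow> complex) \<Rightarrow> op" where
  "diag a = (\<lambda>i j. if i = j then a j else 0)"

definition opnorm_sq :: "op \<Rightarrow> ennreal" where
  "opnorm_sq M = (SUP x \<in> {x :: int \<Rightarrow> complex. finite {j. x j \<noteq> 0} \<and>
        (\<Sum>j\<in>{j. x j \<noteq> 0}. (cmod (x j))\<^sup>2) \<le> 1}.
      \<integral>\<^sup>+ i. ennreal ((cmod (\<Sum>j\<in>{j. x j \<noteq> 0}. M i j * x j))\<^sup>2) \<partial>count_space UNIV)"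

definition has_finite_limits :: "(int \<Rightarrow> complex) \<Rightarrow> bool" where
  "has_finite_limits a \<longleftrightarrow> (\<exists>l1 l2. (a \<longlongrightarrow> l1) at_top \<and> (a \<longlongrightarrow> l2) at_bot)"

definition eventually_const :: "(int \<Rightarrow> complex) \<Rightarrow> bool" where
  "eventually_const a \<longleftrightarrow> (\<exists>k0. (\<forall>k\<ge>k0. a k = a k0) \<and> (\<forall>k\<le>-k0. a k = a (-k0)))"

inductive_set Calg :: "op set" where
  gen_U: "shift 1 \<in> Calg"
| gen_diag: "has_finite_limits a \<Longrightarrow> diag a \<in> Calg"
| add: "M \<in> Calg \<Longrightarrow> N \<in> Calg \<Longrightarrow> op_add M N \<in> Calg"
| scale: "M \<in> Calg \<Longrightarrow> op_scale c M \<in> Calg"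
| mult: "M \<in> Calg \<Longrightarrow> N \<in> Calg \<Longrightarrow> op_mult M N \<in> Calg"
| adj: "M \<in> Calg \<Longrightarrow> op_adj M \<in> Calg"
| lim: "(\<And>j. X j \<in> Calg) \<Longrightarrow> ((\<lambda>j. opnorm_sq (op_diff (X j) Y)) \<longlongrightarrow> 0) sequentially
        \<Longrightarrow> Y \<in> Calg"

definition Alg0 :: "op set" where
  "Alg0 = {M. \<exists>F a. finite F \<and> (\<forall>m\<in>F. eventually_const (a m)) \<and>
       M = (\<lambda>i j. \<Sum>m\<in>F. op_mult (shift m) (diag (a m)) i j)}"

definition convergent_increments :: "(int \<Rightarrow> complex) \<Rightarrow> bool" where
  "convergent_increments \<beta> \<longleftrightarrow>
     (\<exists>L1 L2. ((\<lambda>k. \<beta> k - \<beta> (k - 1)) \<longlongrightarrow> L1) at_top \<and>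
             ((\<lambda>k. \<beta> k - \<beta> (k - 1)) \<longlongrightarrow> L2) at_bot)"

definition cov_deriv :: "int \<Rightarrow> (int \<Rightarrow> complex) \<Rightarrow> op \<Rightarrow> op" where
  "cov_deriv n \<beta> a = op_comm (op_mult (shift n) (diag \<beta>)) a"

definition approx_inner :: "(op \<Rightarrow> op) \<Rightarrow> bool" where
  "approx_inner d \<longleftrightarrow> (\<exists>x :: nat \<Rightarrow> op. (\<forall>j. x j \<in> Calg) \<and>
      (\<forall>a\<in>Alg0. ((\<lambda>j. opnorm_sq (op_diff (d a) (op_comm (x j) a))) \<longlongrightarrow> 0) sequentially))"

end

theory Submission
  imports Defs
begin

text \<open>Write \<delta> p = \<beta> (p + 1) - \<beta> p. Everything is read off the matrix entries of
weighted shifts U^s g(K).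

If d is approximated by commutators [x_j, -], testing on a = U shows that \<delta> is uniformly
approximated by the increments of the bounded sequences p \<mapsto> x_j (p + n) p. Summing over a
long stretch on which \<delta> is close to its limit L at +\<infinity> or -\<infinity> then bounds m * cmod L
uniformly in the length m, so L = 0.

Conversely, if \<delta> vanishes at both ends, take x_J = U^n \<beta>_J(K) with \<beta>_J = \<beta> frozen outside
[-J, J]. For a = \<Sum> U^m a_m(K) the operator d(a) - [x_J, a] = [U^n (\<beta> - \<beta>_J)(K), a] is a finite
sum of weighted shifts whose weights vanish on [-J, J], and far out, where a_m is constant,
are increments of \<beta> - \<beta>_J over m steps; these are uniformly small once J is large.\<close>

lemma nn_integral_count_space_le_if_finite_sums_le:
  fixes f :: "int \<Rightarrow> ennreal"
  assumes "\<And>I. finite I \<Longrightarrow> (\<Sum>i\<in>I. f i) \<le> B"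
  shows "(\<integral>\<^sup>+ i. f i \<partial>count_space UNIV) \<le> B"
proof -
  define g where "g = (\<lambda>N::nat. \<lambda>i. f i * indicator {- int N..int N} i)"
  have f_eq: "f i = (SUP N. g N i)" for i
  proof (rule antisym)
    show "f i \<le> (SUP N. g N i)"
      by (rule SUP_upper2[where i="nat \<bar>i\<bar>"]) (auto simp: g_def indicator_def)
    show "(SUP N. g N i) \<le> f i"
      by (rule SUP_least) (simp add: g_def indicator_def)
  qed
  have "incseq g"
    by (auto simp: g_def incseq_def le_fun_def indicator_def)
  have "(\<integral>\<^sup>+ i. f i \<partial>count_space UNIV) = (SUP N. \<integral>\<^sup>+ i. g N i \<partial>count_space UNIV)"
    unfolding f_eq by (rule nn_integral_monotone_convergence_SUP[OF \<open>incseq g\<close>]) simp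
  also have "\<dots> \<le> B"
  proof (rule SUP_least)
    fix N
    have "(\<integral>\<^sup>+ i. g N i \<partial>count_space UNIV) = (\<Sum>i\<in>{- int N..int N}. f i)"
      by (subst nn_integral_count_space'[of "{- int N..int N}"]) (auto simp: g_def)
    also have "\<dots> \<le> B" by (rule assms) simp
    finally show "(\<integral>\<^sup>+ i. g N i \<partial>count_space UNIV) \<le> B" .
  qed
  finally show ?thesis .
qed

lemma finite_sum_le_nn_integral_count_space:
  fixes f :: "int \<Rightarrow> ennreal"
  assumes "finite I"
  shows "(\<Sum>i\<in>I. f i) \<le> (\<integral>\<^sup>+ i. f i \<partial>count_space UNIV)"
proof -
  have "(\<Sum>i\<in>I. f i) = (\<integral>\<^sup>+ i. f i * indicator I i \<partial>count_space UNIV)"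
    using assms by (subst nn_integral_count_space') (auto intro!: sum.cong)
  also have "\<dots> \<le> (\<integral>\<^sup>+ i. f i \<partial>count_space UNIV)"
    by (intro nn_integral_mono) (auto simp: indicator_def)
  finally show ?thesis .
qed

lemma norm_sum_mult_le:
  fixes x w :: "'a \<Rightarrow> complex"
  shows "cmod (\<Sum>j\<in>S. x j * w j) \<le> sqrt (\<Sum>j\<in>S. (cmod (x j))\<^sup>2) * sqrt (\<Sum>j\<in>S. (cmod (w j))\<^sup>2)"
proof -
  have "cmod (\<Sum>j\<in>S. x j * w j) \<le> (\<Sum>j\<in>S. \<bar>cmod (x j)\<bar> * \<bar>cmod (w j)\<bar>)"
    by (rule order_trans[OF norm_sum]) (simp add: norm_mult)
  also have "\<dots> \<le> L2_set (\<lambda>j. cmod (x j)) S * L2_set (\<lambda>j. cmod (w j)) S"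
    by (rule L2_set_mult_ineq)
  finally show ?thesis by (simp add: L2_set_def)
qed

lemma norm_sum_squared_le:
  fixes z :: "'a \<Rightarrow> complex"
  shows "(cmod (\<Sum>m\<in>F. z m))\<^sup>2 \<le> real (card F) * (\<Sum>m\<in>F. (cmod (z m))\<^sup>2)"
proof -
  have "cmod (\<Sum>m\<in>F. z m * 1) \<le> sqrt (\<Sum>m\<in>F. (cmod (z m))\<^sup>2) * sqrt (\<Sum>m\<in>F. (cmod (1::complex))\<^sup>2)"
    by (rule norm_sum_mult_le)
  then have "(cmod (\<Sum>m\<in>F. z m))\<^sup>2 \<le> (sqrt (\<Sum>m\<in>F. (cmod (z m))\<^sup>2) * sqrt (real (card F)))\<^sup>2"
    by (intro power_mono) auto
  also have "\<dots> = real (card F) * (\<Sum>m\<in>F. (cmod (z m))\<^sup>2)"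
    by (simp add: power_mult_distrib sum_nonneg)
  finally show ?thesis .
qed

lemma norm_add_squared_le: "(cmod (a + b))\<^sup>2 \<le> 2 * (cmod a)\<^sup>2 + 2 * (cmod b)\<^sup>2"
proof -
  have "(cmod (a + b))\<^sup>2 \<le> (cmod a + cmod b)\<^sup>2"
    by (intro power_mono norm_triangle_ineq) simp
  also have "\<dots> \<le> 2 * (cmod a)\<^sup>2 + 2 * (cmod b)\<^sup>2"
    using sum_squares_bound[of "cmod a" "cmod b"] by (simp add: power2_sum)
  finally show ?thesis .
qed

section \<open>Bounded operators\<close>

text \<open>Only finite sections are tested, which avoids summability questions in the closure
properties below.\<close>

definition op_bounded :: "op \<Rightarrow> real \<Rightarrow> bool" where
  "op_bounded M B \<longleftrightarrow> (\<forall>S x I. finite S \<longrightarrow> finite I \<longrightarrow>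
     (\<Sum>i\<in>I. (cmod (\<Sum>j\<in>S. M i j * x j))\<^sup>2) \<le> B * (\<Sum>j\<in>S. (cmod (x j))\<^sup>2))"

lemma op_boundedD:
  "op_bounded M B \<Longrightarrow> finite S \<Longrightarrow> finite I \<Longrightarrow>
     (\<Sum>i\<in>I. (cmod (\<Sum>j\<in>S. M i j * x j))\<^sup>2) \<le> B * (\<Sum>j\<in>S. (cmod (x j))\<^sup>2)"
  unfolding op_bounded_def by blast

lemma op_bounded_nonneg: "op_bounded M B \<Longrightarrow> 0 \<le> B"
  using op_boundedD[of M B "{0}" "{}" "\<lambda>_. 1"] by simp

lemma op_bounded_entry: "op_bounded M B \<Longrightarrow> (cmod (M i j))\<^sup>2 \<le> B"
  using op_boundedD[of M B "{j}" "{i}" "\<lambda>_. 1"] by simp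

lemma opnorm_sq_le_if_op_bounded:
  assumes "op_bounded M B"
  shows "opnorm_sq M \<le> ennreal B"
  unfolding opnorm_sq_def
proof (rule SUP_least)
  fix x assume x: "x \<in> {x :: int \<Rightarrow> complex. finite {j. x j \<noteq> 0} \<and>
        (\<Sum>j\<in>{j. x j \<noteq> 0}. (cmod (x j))\<^sup>2) \<le> 1}"
  show "(\<integral>\<^sup>+ i. ennreal ((cmod (\<Sum>j\<in>{j. x j \<noteq> 0}. M i j * x j))\<^sup>2) \<partial>count_space UNIV) \<le> ennreal B"
  proof (rule nn_integral_count_space_le_if_finite_sums_le)
    fix I :: "int set" assume I: "finite I"
    have "(\<Sum>i\<in>I. (cmod (\<Sum>j\<in>{j. x j \<noteq> 0}. M i j * x j))\<^sup>2) \<le> B * (\<Sum>j\<in>{j. x j \<noteq> 0}. (cmod (x j))\<^sup>2)"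
      using op_boundedD[OF assms _ I] x by blast
    also have "\<dots> \<le> B"
      using x op_bounded_nonneg[OF assms] by (auto intro: mult_left_le)
    finally show "(\<Sum>i\<in>I. ennreal ((cmod (\<Sum>j\<in>{j. x j \<noteq> 0}. M i j * x j))\<^sup>2)) \<le> ennreal B"
      by (simp add: sum_ennreal ennreal_leI)
  qed
qed

lemma op_bounded_if_opnorm_sq_le:
  assumes "opnorm_sq M \<le> ennreal B" "0 \<le> B"
  shows "op_bounded M B"
  unfolding op_bounded_def
proof (intro allI impI)
  fix S x I assume S: "finite (S::int set)" and I: "finite (I::int set)"
  define X where "X = (\<Sum>j\<in>S. (cmod (x j))\<^sup>2)"
  show "(\<Sum>i\<in>I. (cmod (\<Sum>j\<in>S. M i j * x j))\<^sup>2) \<le> B * X"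
  proof (cases "X = 0")
    case True
    then have "\<forall>j\<in>S. x j = 0" unfolding X_def using S by (simp add: sum_nonneg_eq_0_iff)
    then show ?thesis using True by simp
  next
    case False
    then have X_pos: "X > 0" unfolding X_def by (simp add: order_less_le sum_nonneg)
    define y where "y = (\<lambda>j. if j \<in> S then x j / complex_of_real (sqrt X) else 0)"
    have supp: "{j. y j \<noteq> 0} \<subseteq> S" unfolding y_def by auto
    have on_S: "(\<Sum>j\<in>{j. y j \<noteq> 0}. g j) = (\<Sum>j\<in>S. g j)" if "\<And>j. y j = 0 \<Longrightarrow> g j = 0" for g
      using supp S that by (intro sum.mono_neutral_left) auto
    have "(\<Sum>j\<in>S. (cmod (y j))\<^sup>2) = (\<Sum>j\<in>S. (cmod (x j))\<^sup>2 / X)"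
      using X_pos by (intro sum.cong) (auto simp: y_def norm_divide power_divide)
    also have "\<dots> = 1" using X_pos by (simp add: X_def[symmetric] sum_divide_distrib[symmetric])
    finally have "(\<Sum>j\<in>{j. y j \<noteq> 0}. (cmod (y j))\<^sup>2) \<le> 1" by (subst on_S) auto
    then have "(\<integral>\<^sup>+ i. ennreal ((cmod (\<Sum>j\<in>{j. y j \<noteq> 0}. M i j * y j))\<^sup>2) \<partial>count_space UNIV)
        \<le> opnorm_sq M"
      unfolding opnorm_sq_def using finite_subset[OF supp S] by (intro SUP_upper) auto
    also have "\<dots> \<le> ennreal B" by fact
    finally have "(\<integral>\<^sup>+ i. ennreal ((cmod (\<Sum>j\<in>S. M i j * y j))\<^sup>2) \<partial>count_space UNIV) \<le> ennreal B"
      by (subst (asm) on_S) auto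
    then have "(\<Sum>i\<in>I. ennreal ((cmod (\<Sum>j\<in>S. M i j * y j))\<^sup>2)) \<le> ennreal B"
      using finite_sum_le_nn_integral_count_space[OF I] order_trans by blast
    then have le: "(\<Sum>i\<in>I. (cmod (\<Sum>j\<in>S. M i j * y j))\<^sup>2) \<le> B"
      using assms(2) by (simp add: sum_ennreal)
    have "(\<Sum>j\<in>S. M i j * y j) = (\<Sum>j\<in>S. M i j * x j) / complex_of_real (sqrt X)" for i
      unfolding y_def by (simp add: sum_divide_distrib)
    then have "(\<Sum>i\<in>I. (cmod (\<Sum>j\<in>S. M i j * y j))\<^sup>2) = (\<Sum>i\<in>I. (cmod (\<Sum>j\<in>S. M i j * x j))\<^sup>2) / X"
      using X_pos by (simp add: norm_divide power_divide) (simp add: sum_divide_distrib)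
    with le X_pos show ?thesis by (simp add: divide_le_eq mult.commute)
  qed
qed

lemma op_bounded_add:
  assumes "op_bounded M B1" "op_bounded N B2"
  shows "op_bounded (op_add M N) (2 * B1 + 2 * B2)"
  unfolding op_bounded_def
proof (intro allI impI)
  fix S x I assume S: "finite (S::int set)" and I: "finite (I::int set)"
  have "(\<Sum>i\<in>I. (cmod (\<Sum>j\<in>S. op_add M N i j * x j))\<^sup>2)
      = (\<Sum>i\<in>I. (cmod ((\<Sum>j\<in>S. M i j * x j) + (\<Sum>j\<in>S. N i j * x j)))\<^sup>2)"
    by (simp add: op_add_def distrib_right sum.distrib)
  also have "\<dots> \<le> (\<Sum>i\<in>I. 2 * (cmod (\<Sum>j\<in>S. M i j * x j))\<^sup>2 + 2 * (cmod (\<Sum>j\<in>S. N i j * x j))\<^sup>2)"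
    by (intro sum_mono norm_add_squared_le)
  also have "\<dots> \<le> 2 * (B1 * (\<Sum>j\<in>S. (cmod (x j))\<^sup>2)) + 2 * (B2 * (\<Sum>j\<in>S. (cmod (x j))\<^sup>2))"
    using op_boundedD[OF assms(1) S I, of x] op_boundedD[OF assms(2) S I, of x]
    by (simp add: sum.distrib flip: sum_distrib_left)
  finally show "(\<Sum>i\<in>I. (cmod (\<Sum>j\<in>S. op_add M N i j * x j))\<^sup>2) \<le> (2 * B1 + 2 * B2) * (\<Sum>j\<in>S. (cmod (x j))\<^sup>2)"
    by (simp add: algebra_simps)
qed

lemma op_bounded_scale:
  assumes "op_bounded M B"
  shows "op_bounded (op_scale c M) ((cmod c)\<^sup>2 * B)"
  unfolding op_bounded_def
proof (intro allI impI)
  fix S x I assume S: "finite (S::int set)" and I: "finite (I::int set)"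
  have "(\<Sum>i\<in>I. (cmod (\<Sum>j\<in>S. op_scale c M i j * x j))\<^sup>2)
      = (cmod c)\<^sup>2 * (\<Sum>i\<in>I. (cmod (\<Sum>j\<in>S. M i j * x j))\<^sup>2)"
    by (simp add: op_scale_def sum_distrib_left[symmetric] mult.assoc norm_mult power_mult_distrib)
  also have "\<dots> \<le> (cmod c)\<^sup>2 * (B * (\<Sum>j\<in>S. (cmod (x j))\<^sup>2))"
    using op_boundedD[OF assms S I] by (intro mult_left_mono) auto
  finally show "(\<Sum>i\<in>I. (cmod (\<Sum>j\<in>S. op_scale c M i j * x j))\<^sup>2) \<le> (cmod c)\<^sup>2 * B * (\<Sum>j\<in>S. (cmod (x j))\<^sup>2)"
    by (simp add: mult.assoc)
qed

lemma op_bounded_diff: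
  assumes "op_bounded M B1" "op_bounded N B2"
  shows "op_bounded (op_diff M N) (2 * B1 + 2 * B2)"
proof -
  have "op_diff M N = op_add M (op_scale (-1) N)"
    by (simp add: op_diff_def op_add_def op_scale_def fun_eq_iff)
  then show ?thesis
    using op_bounded_add[OF assms(1) op_bounded_scale[OF assms(2), of "-1"]] by simp
qed

text \<open>With z the image of x under the adjoint and w the image of z under M, the squared norm
of z is the inner product of x and w; Cauchy-Schwarz and the bound for M then give
Z^2 \<le> X * B * Z.\<close>

lemma op_bounded_adj:
  assumes "op_bounded M B"
  shows "op_bounded (op_adj M) B"
  unfolding op_bounded_def
proof (intro allI impI)
  fix S x I assume S: "finite (S::int set)" and I: "finite (I::int set)"
  define z where "z = (\<lambda>i. \<Sum>j\<in>S. op_adj M i j * x j)"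
  define w where "w = (\<lambda>j. \<Sum>i\<in>I. M j i * z i)"
  define Z where "Z = (\<Sum>i\<in>I. (cmod (z i))\<^sup>2)"
  define X where "X = (\<Sum>j\<in>S. (cmod (x j))\<^sup>2)"
  define W where "W = (\<Sum>j\<in>S. (cmod (w j))\<^sup>2)"
  have B0: "0 \<le> B" using op_bounded_nonneg[OF assms] .
  have nonneg: "0 \<le> Z" "0 \<le> X" "0 \<le> W" unfolding Z_def X_def W_def by (auto intro: sum_nonneg)
  have "complex_of_real Z = (\<Sum>i\<in>I. z i * cnj (z i))"
    unfolding Z_def by (subst of_real_sum) (rule sum.cong[OF refl], rule complex_norm_square)
  also have "\<dots> = (\<Sum>j\<in>S. \<Sum>i\<in>I. cnj (M j i) * x j * cnj (z i))"
    unfolding z_def op_adj_def by (simp add: sum_distrib_right sum.swap[of _ I])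
  also have "\<dots> = (\<Sum>j\<in>S. x j * cnj (w j))"
    unfolding w_def by (simp add: sum_distrib_left mult_ac)
  finally have "Z = cmod (\<Sum>j\<in>S. x j * cnj (w j))"
    using nonneg by (metis norm_of_real abs_of_nonneg)
  also have "\<dots> \<le> sqrt X * sqrt W"
    unfolding X_def W_def using norm_sum_mult_le[of x "\<lambda>j. cnj (w j)" S] by simp
  finally have "Z\<^sup>2 \<le> X * W"
    using nonneg power_mono[of Z "sqrt X * sqrt W" 2] by (simp add: power_mult_distrib)
  also have "\<dots> \<le> X * (B * Z)"
    unfolding W_def Z_def w_def using op_boundedD[OF assms I S] nonneg by (intro mult_left_mono) auto
  finally have "Z \<le> B * X"
    using nonneg B0 by (cases "Z = 0") (auto simp: power2_eq_square mult_ac)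
  then show "(\<Sum>i\<in>I. (cmod (\<Sum>j\<in>S. op_adj M i j * x j))\<^sup>2) \<le> B * (\<Sum>j\<in>S. (cmod (x j))\<^sup>2)"
    unfolding Z_def z_def X_def .
qed

lemma op_bounded_row_norm: "op_bounded M B \<Longrightarrow> finite T \<Longrightarrow> (\<Sum>k\<in>T. (cmod (M i k))\<^sup>2) \<le> B"
  using op_boundedD[OF op_bounded_adj, of M B "{i}" T "\<lambda>_. 1"] by (simp add: op_adj_def)

lemma op_bounded_column_norm: "op_bounded M B \<Longrightarrow> finite T \<Longrightarrow> (\<Sum>k\<in>T. (cmod (M k j))\<^sup>2) \<le> B"
  using op_boundedD[of M B "{j}" T "\<lambda>_. 1"] by simp

lemma op_bounded_product_summable:
  assumes "op_bounded M B1" "op_bounded N B2"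
  shows "(\<lambda>k. M i k * N k j) summable_on UNIV"
proof (rule abs_summable_summable, rule nonneg_bdd_above_summable_on)
  show "bdd_above (sum (\<lambda>k. norm (M i k * N k j)) ` {F. F \<subseteq> UNIV \<and> finite F})"
  proof (rule bdd_aboveI)
    fix y assume "y \<in> sum (\<lambda>k. norm (M i k * N k j)) ` {F. F \<subseteq> UNIV \<and> finite F}"
    then obtain T where T: "finite T" "y = (\<Sum>k\<in>T. norm (M i k * N k j))" by auto
    have "y \<le> (\<Sum>k\<in>T. ((cmod (M i k))\<^sup>2 + (cmod (N k j))\<^sup>2) / 2)"
      unfolding T(2) norm_mult by (intro sum_mono) (use sum_squares_bound[of "cmod (M i _)" "cmod (N _ j)"] in \<open>simp add: mult_ac\<close>)
    also have "\<dots> = ((\<Sum>k\<in>T. (cmod (M i k))\<^sup>2) + (\<Sum>k\<in>T. (cmod (N k j))\<^sup>2)) / 2"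
      by (simp add: sum.distrib sum_divide_distrib[symmetric])
    also have "\<dots> \<le> (B1 + B2) / 2"
      using op_bounded_row_norm[OF assms(1) T(1), of i] op_bounded_column_norm[OF assms(2) T(1), of j]
      by (intro divide_right_mono add_mono) auto
    finally show "y \<le> (B1 + B2) / 2" .
  qed
qed simp

lemma has_sum_finite_sum:
  fixes f :: "'i \<Rightarrow> 'a \<Rightarrow> 'b::topological_comm_monoid_add"
  assumes "finite F" "\<And>m. m \<in> F \<Longrightarrow> (f m has_sum s m) A"
  shows "((\<lambda>k. \<Sum>m\<in>F. f m k) has_sum (\<Sum>m\<in>F. s m)) A"
  using assms by (induction F rule: finite_induct) (auto intro: has_sum_add)

lemma op_bounded_mult:
  assumes "op_bounded M B1" "op_bounded N B2"
  shows "op_bounded (op_mult M N) (B1 * B2)"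
  unfolding op_bounded_def
proof (intro allI impI)
  fix S x I assume S: "finite (S::int set)" and I: "finite (I::int set)"
  define y where "y = (\<lambda>k. \<Sum>j\<in>S. N k j * x j)"
  define v where "v = (\<lambda>i. \<Sum>j\<in>S. op_mult M N i j * x j)"
  define X where "X = (\<Sum>j\<in>S. (cmod (x j))\<^sup>2)"
  have B1: "0 \<le> B1" using op_bounded_nonneg[OF assms(1)] .
  have has_sum_v: "((\<lambda>k. M i k * y k) has_sum v i) UNIV" for i
  proof -
    have "((\<lambda>k. M i k * N k j * x j) has_sum op_mult M N i j * x j) UNIV" for j
      unfolding op_mult_def
      by (intro has_sum_cmult_left has_sum_infsum op_bounded_product_summable[OF assms])
    then have "((\<lambda>k. \<Sum>j\<in>S. M i k * N k j * x j) has_sum v i) UNIV"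
      unfolding v_def using S by (intro has_sum_finite_sum) auto
    then show ?thesis
      unfolding y_def by (simp add: sum_distrib_left mult_ac)
  qed
  have "((\<lambda>T. \<Sum>i\<in>I. (cmod (\<Sum>k\<in>T. M i k * y k))\<^sup>2) \<longlongrightarrow> (\<Sum>i\<in>I. (cmod (v i))\<^sup>2))
        (finite_subsets_at_top UNIV)"
    using has_sum_v unfolding has_sum_def by (intro tendsto_intros) auto
  moreover have "\<forall>\<^sub>F T in finite_subsets_at_top UNIV.
      (\<Sum>i\<in>I. (cmod (\<Sum>k\<in>T. M i k * y k))\<^sup>2) \<le> B1 * (B2 * X)"
  proof (rule eventually_finite_subsets_at_top_weakI)
    fix T :: "int set" assume T: "finite T"
    have "(\<Sum>i\<in>I. (cmod (\<Sum>k\<in>T. M i k * y k))\<^sup>2) \<le> B1 * (\<Sum>k\<in>T. (cmod (y k))\<^sup>2)"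
      using op_boundedD[OF assms(1) T I] by blast
    also have "\<dots> \<le> B1 * (B2 * X)"
      using op_boundedD[OF assms(2) S T, of x] B1 unfolding y_def X_def by (intro mult_left_mono) auto
    finally show "(\<Sum>i\<in>I. (cmod (\<Sum>k\<in>T. M i k * y k))\<^sup>2) \<le> B1 * (B2 * X)" .
  qed
  ultimately have "(\<Sum>i\<in>I. (cmod (v i))\<^sup>2) \<le> B1 * (B2 * X)"
    by (rule tendsto_upperbound) (simp add: finite_subsets_at_top_neq_bot)
  then show "(\<Sum>i\<in>I. (cmod (\<Sum>j\<in>S. op_mult M N i j * x j))\<^sup>2) \<le> B1 * B2 * (\<Sum>j\<in>S. (cmod (x j))\<^sup>2)"
    unfolding v_def X_def by (simp add: mult.assoc)
qed

lemma op_bounded_sum: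
  assumes "finite F" and "\<And>m. m \<in> F \<Longrightarrow> op_bounded (M m) B" and "0 \<le> B"
  shows "op_bounded (\<lambda>i j. \<Sum>m\<in>F. M m i j) (real (card F) * real (card F) * B)"
  unfolding op_bounded_def
proof (intro allI impI)
  fix S x I assume S: "finite (S::int set)" and I: "finite (I::int set)"
  have "(\<Sum>i\<in>I. (cmod (\<Sum>j\<in>S. (\<Sum>m\<in>F. M m i j) * x j))\<^sup>2)
      = (\<Sum>i\<in>I. (cmod (\<Sum>m\<in>F. \<Sum>j\<in>S. M m i j * x j))\<^sup>2)"
    by (simp add: sum_distrib_right sum.swap[of _ S])
  also have "\<dots> \<le> (\<Sum>i\<in>I. real (card F) * (\<Sum>m\<in>F. (cmod (\<Sum>j\<in>S. M m i j * x j))\<^sup>2))"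
    by (intro sum_mono norm_sum_squared_le)
  also have "\<dots> = real (card F) * (\<Sum>m\<in>F. \<Sum>i\<in>I. (cmod (\<Sum>j\<in>S. M m i j * x j))\<^sup>2)"
    by (simp add: sum_distrib_left sum.swap[of _ I])
  also have "\<dots> \<le> real (card F) * (\<Sum>m\<in>F. B * (\<Sum>j\<in>S. (cmod (x j))\<^sup>2))"
    using op_boundedD[OF assms(2) S I] by (intro mult_left_mono sum_mono) auto
  finally show "(\<Sum>i\<in>I. (cmod (\<Sum>j\<in>S. (\<Sum>m\<in>F. M m i j) * x j))\<^sup>2)
      \<le> real (card F) * real (card F) * B * (\<Sum>j\<in>S. (cmod (x j))\<^sup>2)"
    by simp
qed

section \<open>Weighted shifts\<close>

text \<open>band s g is the weighted shift U^s g(K).\<close>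

definition band :: "int \<Rightarrow> (int \<Rightarrow> complex) \<Rightarrow> op" where
  "band s g = (\<lambda>i j. if i = j + s then g j else 0)"

lemma infsum_eq_single:
  fixes g :: "'a \<Rightarrow> 'b::{topological_comm_monoid_add,t2_space}"
  assumes "\<And>k. k \<noteq> c \<Longrightarrow> g k = 0"
  shows "infsum g UNIV = g c"
  using assms by (intro infsumI has_sum_finite_neutralI[where B="{c}"]) auto

lemma shift_eq_band: "shift m = band m (\<lambda>_. 1)"
  by (simp add: shift_def band_def fun_eq_iff)

lemma diag_eq_band: "diag a = band 0 a"
  by (simp add: diag_def band_def fun_eq_iff)

lemma op_mult_band_right: "op_mult M (band s g) = (\<lambda>i j. M i (j + s) * g j)"
proof -
  have "op_mult M (band s g) i j = M i (j + s) * g j" for i j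
    unfolding op_mult_def by (subst infsum_eq_single[of "j + s"]) (auto simp: band_def)
  then show ?thesis by blast
qed

lemma op_mult_band_left: "op_mult (band s g) M = (\<lambda>i j. g (i - s) * M (i - s) j)"
proof -
  have "op_mult (band s g) M i j = g (i - s) * M (i - s) j" for i j
    unfolding op_mult_def by (subst infsum_eq_single[of "i - s"]) (auto simp: band_def)
  then show ?thesis by blast
qed

lemma shift_mult_diag: "op_mult (shift m) (diag g) = band m g"
  unfolding shift_eq_band op_mult_band_left by (auto simp: diag_def band_def fun_eq_iff)

lemma op_comm_band: "op_comm (band s g) M = (\<lambda>i j. g (i - s) * M (i - s) j - M i (j + s) * g j)"
  unfolding op_comm_def op_diff_def op_mult_band_left op_mult_band_right by simp

lemma op_comm_band_band:
  "op_comm (band n g) (band m a) = band (m + n) (\<lambda>k. g (k + m) * a k - a (k + n) * g k)"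
  unfolding op_comm_band by (auto simp: band_def fun_eq_iff algebra_simps)

lemma op_comm_band_sum:
  "op_comm (band n g) (\<lambda>i j. \<Sum>m\<in>F. M m i j) = (\<lambda>i j. \<Sum>m\<in>F. op_comm (band n g) (M m) i j)"
  unfolding op_comm_band by (simp add: sum_distrib_left sum_distrib_right sum_subtractf)

lemma op_comm_band_diff:
  "op_diff (op_comm (band n g) M) (op_comm (band n h) M) = op_comm (band n (\<lambda>k. g k - h k)) M"
  unfolding op_comm_band op_diff_def by (simp add: algebra_simps)

lemma op_bounded_band:
  assumes "\<And>j. cmod (g j) \<le> c"
  shows "op_bounded (band s g) (c\<^sup>2)"
  unfolding op_bounded_def
proof (intro allI impI)
  fix S x I assume S: "finite (S::int set)" and I: "finite (I::int set)"
  have "(cmod (\<Sum>j\<in>S. band s g i j * x j))\<^sup>2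
      = (if i - s \<in> S then (cmod (g (i - s) * x (i - s)))\<^sup>2 else 0)" for i
  proof -
    have "(\<Sum>j\<in>S. band s g i j * x j) = (\<Sum>j\<in>S. if j = i - s then g j * x j else 0)"
      by (intro sum.cong) (auto simp: band_def)
    then show ?thesis using S by (simp add: sum.delta')
  qed
  then have "(\<Sum>i\<in>I. (cmod (\<Sum>j\<in>S. band s g i j * x j))\<^sup>2)
      = (\<Sum>i\<in>{i\<in>I. i - s \<in> S}. (cmod (g (i - s) * x (i - s)))\<^sup>2)"
    using I by (simp add: sum.inter_filter)
  also have "\<dots> \<le> (\<Sum>i\<in>(\<lambda>j. j + s) ` S. (cmod (g (i - s) * x (i - s)))\<^sup>2)"
    using S by (intro sum_mono2) (auto simp: image_iff intro!: bexI[where x="_ - s"])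
  also have "\<dots> = (\<Sum>j\<in>S. (cmod (g j) * cmod (x j))\<^sup>2)"
    by (subst sum.reindex) (auto simp: inj_on_def norm_mult)
  also have "\<dots> \<le> (\<Sum>j\<in>S. c\<^sup>2 * (cmod (x j))\<^sup>2)"
    using assms by (intro sum_mono) (simp add: power_mult_distrib mult_right_mono power_mono)
  finally show "(\<Sum>i\<in>I. (cmod (\<Sum>j\<in>S. band s g i j * x j))\<^sup>2) \<le> c\<^sup>2 * (\<Sum>j\<in>S. (cmod (x j))\<^sup>2)"
    by (simp add: sum_distrib_left)
qed

section \<open>The C*-algebra A\<close>

lemma bounded_if_has_finite_limits:
  assumes "has_finite_limits a"
  shows "\<exists>C. \<forall>k. cmod (a k) \<le> C"
proof -
  obtain l1 l2 where "(a \<longlongrightarrow> l1) at_top" "(a \<longlongrightarrow> l2) at_bot"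
    using assms unfolding has_finite_limits_def by blast
  then have "\<forall>\<^sub>F k in at_top. dist (a k) l1 < 1" "\<forall>\<^sub>F k in at_bot. dist (a k) l2 < 1"
    by (simp_all add: tendstoD)
  then obtain N N' where N: "\<And>k. k \<ge> N \<Longrightarrow> dist (a k) l1 < 1"
    and N': "\<And>k. k \<le> N' \<Longrightarrow> dist (a k) l2 < 1"
    by (auto simp: eventually_at_top_linorder eventually_at_bot_linorder)
  define C where "C = cmod l1 + cmod l2 + 1 + (\<Sum>k\<in>{N'..N}. cmod (a k))"
  have "cmod (a k) \<le> C" for k
  proof -
    have nonneg: "0 \<le> (\<Sum>k\<in>{N'..N}. cmod (a k))" by (intro sum_nonneg) auto
    consider "k \<ge> N" | "k \<le> N'" | "k \<in> {N'..N}" by fastforce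
    then show ?thesis
    proof cases
      case 1
      then show ?thesis
        using N[OF 1] nonneg norm_triangle_ineq2[of "a k" l1] norm_ge_zero[of l2]
        unfolding C_def dist_norm by linarith
    next
      case 2
      then show ?thesis
        using N'[OF 2] nonneg norm_triangle_ineq2[of "a k" l2] norm_ge_zero[of l1]
        unfolding C_def dist_norm by linarith
    next
      case 3
      then have "cmod (a k) \<le> (\<Sum>k\<in>{N'..N}. cmod (a k))"
        by (intro member_le_sum) auto
      then show ?thesis using norm_ge_zero[of l1] norm_ge_zero[of l2] unfolding C_def by linarith
    qed
  qed
  then show ?thesis by blast
qed

lemma has_finite_limits_if_eventually_const:
  assumes "eventually_const a"
  shows "has_finite_limits a"
proof -
  obtain k0 where "\<forall>k\<ge>k0. a k = a k0" "\<forall>k\<le>-k0. a k = a (-k0)"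
    using assms unfolding eventually_const_def by blast
  then have "\<forall>\<^sub>F k in at_top. a k = a k0" "\<forall>\<^sub>F k in at_bot. a k = a (-k0)"
    unfolding eventually_at_top_linorder eventually_at_bot_linorder by blast+
  then have "(a \<longlongrightarrow> a k0) at_top" "(a \<longlongrightarrow> a (-k0)) at_bot"
    by (simp_all add: tendsto_eventually)
  then show ?thesis unfolding has_finite_limits_def by blast
qed

lemma Calg_imp_op_bounded: "M \<in> Calg \<Longrightarrow> \<exists>B. op_bounded M B"
proof (induction rule: Calg.induct)
  case gen_U
  show ?case using op_bounded_band[of "\<lambda>_. 1" 1 1] by (auto simp: shift_eq_band)
next
  case (gen_diag a)
  then obtain c where "\<forall>k. cmod (a k) \<le> c" using bounded_if_has_finite_limits by blast
  then show ?case using op_bounded_band[of a c 0] by (auto simp: diag_eq_band)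
next
  case (lim X Y)
  have "\<forall>\<^sub>F j in sequentially. opnorm_sq (op_diff (X j) Y) < 1"
    using lim.hyps(2) by (rule order_tendstoD) simp
  then obtain j where "opnorm_sq (op_diff (X j) Y) < 1" by (auto simp: eventually_sequentially)
  then have "op_bounded (op_diff (X j) Y) 1" by (intro op_bounded_if_opnorm_sq_le) auto
  moreover obtain B where "op_bounded (X j) B" using lim.IH by blast
  moreover have "op_diff (X j) (op_diff (X j) Y) = Y" by (simp add: op_diff_def)
  ultimately show ?case using op_bounded_diff[of "X j" B "op_diff (X j) Y" 1] by auto
next
  case (add M N) then show ?case using op_bounded_add by blast
next
  case (scale M c) then show ?case using op_bounded_scale by blast
next
  case (mult M N) then show ?case using op_bounded_mult by blast
next
  case (adj M) then show ?case using op_bounded_adj by blast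
qed

section \<open>Approximately inner implies vanishing increments\<close>

lemma telescoping_stretch_bound:
  fixes c :: "int \<Rightarrow> complex"
  assumes bounded: "\<And>p. cmod (c p) \<le> B"
    and close: "\<And>i. i < m \<Longrightarrow> cmod (L - (c (N + int i + 1) - c (N + int i))) \<le> \<epsilon>"
  shows "real m * cmod L \<le> real m * \<epsilon> + 2 * B"
proof -
  have "of_nat m * L - (c (N + int m) - c N) = (\<Sum>i<m. L - (c (N + int i + 1) - c (N + int i)))"
    using sum_lessThan_telescope[of "\<lambda>i. c (N + int i)" m] by (simp add: sum_subtractf add_ac)
  also have "cmod \<dots> \<le> (\<Sum>i<m. \<epsilon>)"
    by (rule sum_norm_le) (simp add: close)
  also have "\<dots> = real m * \<epsilon>"
    by simp
  finally have "cmod (of_nat m * L - (c (N + int m) - c N)) \<le> real m * \<epsilon>" .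
  moreover have "cmod (of_nat m * L) \<le> cmod (of_nat m * L - (c (N + int m) - c N)) + cmod (c (N + int m)) + cmod (c N)"
    using norm_triangle_ineq[of "of_nat m * L - (c (N + int m) - c N)" "c (N + int m) - c N"]
      norm_triangle_ineq4[of "c (N + int m)" "c N"] by simp
  ultimately show ?thesis
    using bounded[of "N + int m"] bounded[of N] by (simp add: norm_mult)
qed

lemma eq_0_if_approximated_by_bounded_increments:
  fixes \<delta> :: "int \<Rightarrow> complex"
  assumes stretches: "\<And>\<epsilon> m. \<epsilon> > 0 \<Longrightarrow> \<exists>N. \<forall>i<m. cmod (\<delta> (N + int i) - L) \<le> \<epsilon>"
    and approx: "\<And>\<epsilon>. \<epsilon> > 0 \<Longrightarrow>
      \<exists>c B. (\<forall>p. cmod (c p) \<le> B) \<and> (\<forall>p. cmod (\<delta> p - (c (p + 1) - c p)) \<le> \<epsilon>)"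
  shows "L = 0"
proof (rule ccontr)
  assume "L \<noteq> 0"
  define \<epsilon> where "\<epsilon> = cmod L / 4"
  have "\<epsilon> > 0" using \<open>L \<noteq> 0\<close> by (simp add: \<epsilon>_def)
  obtain c B where B: "\<And>p. cmod (c p) \<le> B" and c: "\<And>p. cmod (\<delta> p - (c (p + 1) - c p)) \<le> \<epsilon>"
    using approx[OF \<open>\<epsilon> > 0\<close>] by blast
  obtain m :: nat where m: "real m > 4 * B / cmod L"
    using reals_Archimedean2 by blast
  obtain N where N: "\<And>i. i < m \<Longrightarrow> cmod (\<delta> (N + int i) - L) \<le> \<epsilon>"
    using stretches[OF \<open>\<epsilon> > 0\<close>] by blast
  have "cmod (L - (c (N + int i + 1) - c (N + int i))) \<le> 2 * \<epsilon>" if "i < m" for i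
    using norm_triangle_ineq4[of "\<delta> (N + int i) - (c (N + int i + 1) - c (N + int i))" "\<delta> (N + int i) - L"]
      c[of "N + int i"] N[OF that] by (simp add: algebra_simps)
  then have "real m * cmod L \<le> real m * (2 * \<epsilon>) + 2 * B"
    by (intro telescoping_stretch_bound[OF B])
  then have "real m * cmod L \<le> 4 * B"
    by (simp add: \<epsilon>_def)
  moreover have "4 * B < real m * cmod L"
    using m \<open>L \<noteq> 0\<close> by (simp add: divide_less_eq)
  ultimately show False by simp
qed

lemma stretch_near_limit_if_tendsto_at_top:
  fixes \<delta> :: "int \<Rightarrow> complex"
  assumes "(\<delta> \<longlongrightarrow> L) at_top" "\<epsilon> > 0"
  shows "\<exists>N. \<forall>i<m. cmod (\<delta> (N + int i) - L) \<le> \<epsilon>"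
proof -
  obtain N where "\<forall>p\<ge>N. dist (\<delta> p) L < \<epsilon>"
    using tendstoD[OF assms] by (auto simp: eventually_at_top_linorder)
  then show ?thesis by (auto simp: dist_norm intro!: exI[of _ N] less_imp_le)
qed

lemma stretch_near_limit_if_tendsto_at_bot:
  fixes \<delta> :: "int \<Rightarrow> complex"
  assumes "(\<delta> \<longlongrightarrow> L) at_bot" "\<epsilon> > 0"
  shows "\<exists>N. \<forall>i<m. cmod (\<delta> (N + int i) - L) \<le> \<epsilon>"
proof -
  obtain N where "\<forall>p\<le>N. dist (\<delta> p) L < \<epsilon>"
    using tendstoD[OF assms] by (auto simp: eventually_at_bot_linorder)
  then show ?thesis by (auto simp: dist_norm intro!: exI[of _ "N - int m"] less_imp_le)
qed

text \<open>Test the approximating commutators on a = U: the (p + n + 1, p) entry of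
d(U) - [x, U] is the increment of \<beta> at p minus the increment at p of c p = x (p + n) p.\<close>

lemma increments_approximated_if_approx_inner:
  assumes "approx_inner (cov_deriv n \<beta>)" "\<epsilon> > 0"
  shows "\<exists>c B. (\<forall>p. cmod (c p) \<le> B) \<and> (\<forall>p. cmod ((\<beta> (p + 1) - \<beta> p) - (c (p + 1) - c p)) \<le> \<epsilon>)"
proof -
  obtain x where x_Calg: "\<And>j. x j \<in> Calg" and conv:
    "\<And>a. a \<in> Alg0 \<Longrightarrow> ((\<lambda>j. opnorm_sq (op_diff (cov_deriv n \<beta> a) (op_comm (x j) a))) \<longlongrightarrow> 0) sequentially"
    using assms(1) unfolding approx_inner_def by blast
  have "shift 1 \<in> Alg0"
    unfolding Alg0_def
    by (intro CollectI exI[of _ "{1}"] exI[of _ "\<lambda>_ _. 1"]) (auto simp: eventually_const_def shift_mult_diag[unfolded shift_eq_band] shift_eq_band)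
  define D where "D j = op_diff (cov_deriv n \<beta> (shift 1)) (op_comm (x j) (shift 1))" for j
  have "\<forall>\<^sub>F j in sequentially. opnorm_sq (D j) < ennreal (\<epsilon>\<^sup>2)"
    using conv[OF \<open>shift 1 \<in> Alg0\<close>] unfolding D_def by (rule order_tendstoD) (use assms(2) in simp)
  then obtain j where "opnorm_sq (D j) < ennreal (\<epsilon>\<^sup>2)"
    by (auto simp: eventually_sequentially)
  then have D_bounded: "op_bounded (D j) (\<epsilon>\<^sup>2)"
    by (intro op_bounded_if_opnorm_sq_le) auto
  obtain B where x_bounded: "op_bounded (x j) B"
    using Calg_imp_op_bounded[OF x_Calg] by blast
  define c where "c p = x j (p + n) p" for p
  have "D j (p + n + 1) p = (\<beta> (p + 1) - \<beta> p) - (c (p + 1) - c p)" for p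
    unfolding D_def cov_deriv_def shift_mult_diag
    unfolding shift_eq_band op_comm_band_band c_def
    unfolding op_comm_def op_diff_def op_mult_band_left op_mult_band_right
    by (simp add: band_def add_ac)
  then have "cmod ((\<beta> (p + 1) - \<beta> p) - (c (p + 1) - c p)) \<le> \<epsilon>" for p
    using op_bounded_entry[OF D_bounded, of "p + n + 1" p] assms(2) by (simp add: power2_le_iff_abs_le)
  moreover have "cmod (c p) \<le> sqrt B" for p
    using op_bounded_entry[OF x_bounded] by (simp add: c_def real_le_rsqrt)
  ultimately show ?thesis by blast
qed

lemma filterlim_int_add_const_at_top: "filterlim (\<lambda>k::int. k + c) at_top at_top"
  unfolding filterlim_at_top eventually_at_top_linorder
proof
  fix Z show "\<exists>N. \<forall>k\<ge>N. Z \<le> k + c" by (rule exI[of _ "Z - c"]) auto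
qed

lemma filterlim_int_add_const_at_bot: "filterlim (\<lambda>k::int. k + c) at_bot at_bot"
  unfolding filterlim_at_bot eventually_at_bot_linorder
proof
  fix Z show "\<exists>N. \<forall>k\<le>N. k + c \<le> Z" by (rule exI[of _ "Z - c"]) auto
qed

lemma increments_tendsto_0_if_approx_inner:
  assumes "convergent_increments \<beta>" "approx_inner (cov_deriv n \<beta>)"
  shows "((\<lambda>k. \<beta> (k + 1) - \<beta> k) \<longlongrightarrow> 0) at_top \<and> ((\<lambda>k. \<beta> (k + 1) - \<beta> k) \<longlongrightarrow> 0) at_bot"
proof -
  obtain L1 L2 where L1: "((\<lambda>k. \<beta> k - \<beta> (k - 1)) \<longlongrightarrow> L1) at_top"
    and L2: "((\<lambda>k. \<beta> k - \<beta> (k - 1)) \<longlongrightarrow> L2) at_bot"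
    using assms(1) unfolding convergent_increments_def by blast
  have top: "((\<lambda>k. \<beta> (k + 1) - \<beta> k) \<longlongrightarrow> L1) at_top"
    using filterlim_compose[OF L1 filterlim_int_add_const_at_top[of 1]] by simp
  have bot: "((\<lambda>k. \<beta> (k + 1) - \<beta> k) \<longlongrightarrow> L2) at_bot"
    using filterlim_compose[OF L2 filterlim_int_add_const_at_bot[of 1]] by simp
  have approx: "\<exists>c B. (\<forall>p. cmod (c p) \<le> B) \<and> (\<forall>p. cmod ((\<beta> (p + 1) - \<beta> p) - (c (p + 1) - c p)) \<le> \<epsilon>)"
    if "\<epsilon> > 0" for \<epsilon>
    using increments_approximated_if_approx_inner[OF assms(2) that] .
  have "L1 = 0"
    using stretch_near_limit_if_tendsto_at_top[OF top] approx by (rule eq_0_if_approximated_by_bounded_increments)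
  moreover have "L2 = 0"
    using stretch_near_limit_if_tendsto_at_bot[OF bot] approx by (rule eq_0_if_approximated_by_bounded_increments)
  ultimately show ?thesis using top bot by simp
qed

section \<open>Vanishing increments imply approximately inner\<close>

lemma op_bounded_mono: "op_bounded M B \<Longrightarrow> B \<le> B' \<Longrightarrow> op_bounded M B'"
  unfolding op_bounded_def by (meson order_trans mult_right_mono sum_nonneg zero_le_power2)

lemma opnorm_sq_tendsto_0I:
  assumes "\<And>\<epsilon>. \<epsilon> > 0 \<Longrightarrow> \<forall>\<^sub>F j in F. op_bounded (X j) \<epsilon>"
  shows "((\<lambda>j. opnorm_sq (X j)) \<longlongrightarrow> 0) F"
proof (rule order_tendstoI)
  fix u :: ennreal assume "u > 0"
  then obtain v where v: "0 < v" "v < u" using dense by blast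
  then obtain r where r: "v = ennreal r" "r > 0"
    by (cases v) (auto simp: top.not_eq_extremum)
  have "\<forall>\<^sub>F j in F. op_bounded (X j) r" using assms \<open>r > 0\<close> .
  then show "\<forall>\<^sub>F j in F. opnorm_sq (X j) < u"
    by eventually_elim (use opnorm_sq_le_if_op_bounded v r in fastforce)
qed simp

lemma shift_Calg: "shift m \<in> Calg"
proof -
  have mult: "op_mult (shift a) (shift b) = shift (a + b)" for a b
    unfolding shift_eq_band[of a] op_mult_band_left by (auto simp: shift_def fun_eq_iff)
  have "shift 1 \<in> Calg" by (rule Calg.gen_U)
  moreover have "op_adj (shift 1) = shift (-1)"
    by (auto simp: op_adj_def shift_def fun_eq_iff)
  ultimately have "shift (-1) \<in> Calg" using Calg.adj by metis
  have "shift 0 \<in> Calg"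
    using Calg.mult[OF \<open>shift 1 \<in> Calg\<close> \<open>shift (-1) \<in> Calg\<close>] by (simp add: mult)
  then show ?thesis
  proof (induction m rule: int_induct[where k=0])
    case base
    then show ?case .
  next
    case (step1 i)
    then show ?case using Calg.mult[OF \<open>shift 1 \<in> Calg\<close>] by (metis mult add.commute)
  next
    case (step2 i)
    then show ?case using Calg.mult[OF \<open>shift (-1) \<in> Calg\<close>] by (metis mult add.commute uminus_add_conv_diff)
  qed
qed

definition clamp :: "int \<Rightarrow> int \<Rightarrow> int" where
  "clamp J k = max (- J) (min J k)"

lemma clamp_eq_self: "\<bar>k\<bar> \<le> J \<Longrightarrow> clamp J k = k"
  unfolding clamp_def by simp

lemma eventually_const_clamp: "eventually_const (\<lambda>k. \<beta> (clamp J k))"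
  unfolding eventually_const_def clamp_def by (intro exI[of _ J]) (simp add: max_def min_def)

lemma clamp_remainder_increment:
  fixes \<beta> :: "int \<Rightarrow> 'a::ab_group_add"
  shows "(\<beta> (k + 1) - \<beta> (clamp J (k + 1))) - (\<beta> k - \<beta> (clamp J k))
    = (if - J \<le> k \<and> k < J then 0 else \<beta> (k + 1) - \<beta> k)"
proof -
  consider "- J \<le> k \<and> k < J" | "J \<le> k" | "k < - J" by linarith
  then show ?thesis
  proof cases
    case 1
    then have "clamp J (k + 1) = k + 1" "clamp J k = k" by (auto simp: clamp_def)
    then show ?thesis using 1 by simp
  next
    case 2
    then have "clamp J (k + 1) = clamp J k" by (auto simp: clamp_def)
    then show ?thesis using 2 by simp
  next
    case 3
    then have "clamp J (k + 1) = clamp J k" by (auto simp: clamp_def)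
    then show ?thesis using 3 by simp
  qed
qed

lemma norm_diff_le_if_increments_le:
  fixes g :: "int \<Rightarrow> 'a::real_normed_vector"
  assumes "\<And>k. norm (g (k + 1) - g k) \<le> \<eta>"
  shows "norm (g u - g v) \<le> of_int \<bar>u - v\<bar> * \<eta>"
proof -
  have step: "norm (g (v + int d) - g v) \<le> real d * \<eta>" for v d
  proof (induction d)
    case (Suc d)
    have "norm (g (v + int (Suc d)) - g v) \<le> norm (g (v + int d + 1) - g (v + int d)) + norm (g (v + int d) - g v)"
      using norm_triangle_ineq[of "g (v + int d + 1) - g (v + int d)" "g (v + int d) - g v"]
      by (simp add: add_ac)
    then show ?case using assms[of "v + int d"] Suc.IH by (simp add: algebra_simps)
  qed simp
  show ?thesis
  proof (cases "v \<le> u")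
    case True
    then show ?thesis using step[of v "nat (u - v)"] by simp
  next
    case False
    then show ?thesis using step[of u "nat (v - u)"] by (simp add: norm_minus_commute)
  qed
qed

lemma eventually_clamp_remainder_increments_le:
  fixes \<beta> :: "int \<Rightarrow> complex"
  assumes top: "((\<lambda>k. \<beta> (k + 1) - \<beta> k) \<longlongrightarrow> 0) at_top"
    and bot: "((\<lambda>k. \<beta> (k + 1) - \<beta> k) \<longlongrightarrow> 0) at_bot"
    and "\<eta> > 0"
  shows "\<forall>\<^sub>F J in at_top. \<forall>k.
    cmod ((\<beta> (k + 1) - \<beta> (clamp J (k + 1))) - (\<beta> k - \<beta> (clamp J k))) \<le> \<eta>"
proof -
  obtain T where T: "\<And>k. k \<ge> T \<Longrightarrow> cmod (\<beta> (k + 1) - \<beta> k) < \<eta>"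
    using tendstoD[OF top \<open>\<eta> > 0\<close>] by (auto simp: eventually_at_top_linorder)
  obtain T' where T': "\<And>k. k \<le> T' \<Longrightarrow> cmod (\<beta> (k + 1) - \<beta> k) < \<eta>"
    using tendstoD[OF bot \<open>\<eta> > 0\<close>] by (auto simp: eventually_at_bot_linorder)
  have "cmod ((\<beta> (k + 1) - \<beta> (clamp J (k + 1))) - (\<beta> k - \<beta> (clamp J k))) \<le> \<eta>"
    if "J \<ge> max T (- T')" for J k
    using T[of k] T'[of k] that \<open>\<eta> > 0\<close> unfolding clamp_remainder_increment by auto
  then show ?thesis
    unfolding eventually_at_top_linorder by blast
qed

text \<open>The remainder \<gamma> vanishes on [-J, J]; outside, a is locally constant, so the coefficient
reduces to a k times an increment of \<gamma> over a step of length m.\<close>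

lemma norm_commutator_coeff_le:
  fixes \<gamma> a :: "int \<Rightarrow> complex"
  assumes zero: "\<And>k. \<bar>k\<bar> \<le> J \<Longrightarrow> \<gamma> k = 0"
    and increments: "\<And>k. cmod (\<gamma> (k + 1) - \<gamma> k) \<le> \<eta>"
    and far_out: "\<And>k. J - \<bar>m\<bar> < \<bar>k\<bar> \<Longrightarrow> a (k + n) = a k"
    and bounded: "\<And>k. cmod (a k) \<le> C"
  shows "cmod (\<gamma> (k + m) * a k - a (k + n) * \<gamma> k) \<le> C * (of_int \<bar>m\<bar> * \<eta>)"
proof -
  have "0 \<le> C" "0 \<le> \<eta>"
    using bounded[of 0] increments[of 0] norm_ge_zero order_trans by blast+
  show ?thesis
  proof (cases "\<bar>k\<bar> \<le> J - \<bar>m\<bar>")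
    case True
    then have "\<gamma> (k + m) = 0" "\<gamma> k = 0" by (auto intro: zero)
    then show ?thesis using \<open>0 \<le> C\<close> \<open>0 \<le> \<eta>\<close> by simp
  next
    case False
    then have "\<gamma> (k + m) * a k - a (k + n) * \<gamma> k = a k * (\<gamma> (k + m) - \<gamma> k)"
      using far_out[of k] by (simp add: algebra_simps)
    then have "cmod (\<gamma> (k + m) * a k - a (k + n) * \<gamma> k) = cmod (a k) * cmod (\<gamma> (k + m) - \<gamma> k)"
      by (simp add: norm_mult)
    also have "\<dots> \<le> C * (of_int \<bar>m\<bar> * \<eta>)"
      using norm_diff_le_if_increments_le[of \<gamma> \<eta> "k + m" k] increments bounded[of k] \<open>0 \<le> C\<close>
      by (intro mult_mono) auto
    finally show ?thesis .
  qed
qed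

lemma eventually_const_shift_invariant_far_out:
  assumes "eventually_const a"
  shows "\<forall>\<^sub>F J in at_top. \<forall>k. J - \<bar>m\<bar> < \<bar>k\<bar> \<longrightarrow> a (k + n) = a k"
proof -
  obtain k0 where top: "\<And>k. k \<ge> k0 \<Longrightarrow> a k = a k0" and bot: "\<And>k. k \<le> - k0 \<Longrightarrow> a k = a (- k0)"
    using assms unfolding eventually_const_def by blast
  have "a (k + n) = a k" if "J \<ge> \<bar>k0\<bar> + \<bar>m\<bar> + \<bar>n\<bar>" "J - \<bar>m\<bar> < \<bar>k\<bar>" for J k
  proof (cases "k \<ge> 0")
    case True
    with that have "k \<ge> k0" "k + n \<ge> k0" by linarith+
    then show ?thesis using top by metis
  next
    case False
    with that have "k \<le> - k0" "k + n \<le> - k0" by linarith+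
    then show ?thesis using bot by metis
  qed
  then show ?thesis
    unfolding eventually_at_top_linorder by blast
qed

lemma eventually_clamp_commutator_coeff_le:
  fixes \<beta> a :: "int \<Rightarrow> complex"
  assumes top: "((\<lambda>k. \<beta> (k + 1) - \<beta> k) \<longlongrightarrow> 0) at_top"
    and bot: "((\<lambda>k. \<beta> (k + 1) - \<beta> k) \<longlongrightarrow> 0) at_bot"
    and "eventually_const a" "\<eta> > 0"
  shows "\<forall>\<^sub>F J in at_top. \<forall>k. cmod ((\<beta> (k + m) - \<beta> (clamp J (k + m))) * a k
      - a (k + n) * (\<beta> k - \<beta> (clamp J k))) \<le> \<eta>"
proof -
  obtain C where C: "\<And>k. cmod (a k) \<le> C"
    using bounded_if_has_finite_limits has_finite_limits_if_eventually_const assms(3) by blast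
  then have "0 \<le> C" using norm_ge_zero order_trans by blast
  define \<eta>' where "\<eta>' = \<eta> / ((C + 1) * (of_int \<bar>m\<bar> + 1))"
  have "\<eta>' > 0" using \<open>0 \<le> C\<close> \<open>\<eta> > 0\<close> by (simp add: \<eta>'_def)
  have "C * (of_int \<bar>m\<bar> * \<eta>') = C * of_int \<bar>m\<bar> * \<eta> / ((C + 1) * (of_int \<bar>m\<bar> + 1))"
    by (simp add: \<eta>'_def)
  also have "\<dots> \<le> (C + 1) * (of_int \<bar>m\<bar> + 1) * \<eta> / ((C + 1) * (of_int \<bar>m\<bar> + 1))"
    using \<open>0 \<le> C\<close> \<open>\<eta> > 0\<close> by (intro divide_right_mono mult_right_mono) (simp_all add: algebra_simps)
  also have "\<dots> = \<eta>"
    using \<open>0 \<le> C\<close> by simp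
  finally have "C * (of_int \<bar>m\<bar> * \<eta>') \<le> \<eta>" .
  moreover have "\<forall>\<^sub>F J in at_top. (\<forall>k. cmod ((\<beta> (k + 1) - \<beta> (clamp J (k + 1))) - (\<beta> k - \<beta> (clamp J k))) \<le> \<eta>')
      \<and> (\<forall>k. J - \<bar>m\<bar> < \<bar>k\<bar> \<longrightarrow> a (k + n) = a k)"
    using eventually_clamp_remainder_increments_le[OF top bot \<open>\<eta>' > 0\<close>]
      eventually_const_shift_invariant_far_out[OF assms(3)] by (rule eventually_conj)
  ultimately show ?thesis
  proof (elim eventually_mono, safe)
    fix J k
    assume "C * (of_int \<bar>m\<bar> * \<eta>') \<le> \<eta>"
      and "\<forall>k. cmod ((\<beta> (k + 1) - \<beta> (clamp J (k + 1))) - (\<beta> k - \<beta> (clamp J k))) \<le> \<eta>'"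
      and "\<forall>k. J - \<bar>m\<bar> < \<bar>k\<bar> \<longrightarrow> a (k + n) = a k"
    then show "cmod ((\<beta> (k + m) - \<beta> (clamp J (k + m))) * a k - a (k + n) * (\<beta> k - \<beta> (clamp J k))) \<le> \<eta>"
      using norm_commutator_coeff_le[of J "\<lambda>k. \<beta> k - \<beta> (clamp J k)" \<eta>' m a n C k] C clamp_eq_self
      by fastforce
  qed
qed

lemma opnorm_sq_sum_band_tendsto_0:
  assumes F: "finite F"
    and small: "\<And>m \<eta>. m \<in> F \<Longrightarrow> \<eta> > 0 \<Longrightarrow> \<forall>\<^sub>F j in G. \<forall>k. cmod (f j m k) \<le> \<eta>"
  shows "((\<lambda>j. opnorm_sq (\<lambda>i i'. \<Sum>m\<in>F. band (s m) (f j m) i i')) \<longlongrightarrow> 0) G"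
proof (rule opnorm_sq_tendsto_0I)
  fix \<epsilon> :: real assume "\<epsilon> > 0"
  define \<eta> where "\<eta> = sqrt \<epsilon> / (real (card F) + 1)"
  have "\<eta> > 0" using \<open>\<epsilon> > 0\<close> by (simp add: \<eta>_def)
  have "real (card F) * real (card F) * \<eta>\<^sup>2 = \<epsilon> * (real (card F) / (real (card F) + 1))\<^sup>2"
    using \<open>\<epsilon> > 0\<close> by (simp add: \<eta>_def power_divide power2_eq_square)
  also have "\<dots> \<le> \<epsilon>"
    using \<open>\<epsilon> > 0\<close> by (intro mult_left_le) (simp_all add: power_le_one)
  finally have \<eta>_small: "real (card F) * real (card F) * \<eta>\<^sup>2 \<le> \<epsilon>" .
  have "\<forall>\<^sub>F j in G. \<forall>m\<in>F. \<forall>k. cmod (f j m k) \<le> \<eta>"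
    by (rule eventually_ball_finite[OF F]) (use small \<open>\<eta> > 0\<close> in blast)
  then show "\<forall>\<^sub>F j in G. op_bounded (\<lambda>i i'. \<Sum>m\<in>F. band (s m) (f j m) i i') \<epsilon>"
  proof eventually_elim
    case (elim j)
    then have "op_bounded (\<lambda>i i'. \<Sum>m\<in>F. band (s m) (f j m) i i') (real (card F) * real (card F) * \<eta>\<^sup>2)"
      by (intro op_bounded_sum[OF F] op_bounded_band) (simp_all add: elim)
    then show ?case using \<eta>_small by (rule op_bounded_mono)
  qed
qed

lemma approx_inner_if_increments_tendsto_0:
  fixes \<beta> :: "int \<Rightarrow> complex"
  assumes top: "((\<lambda>k. \<beta> (k + 1) - \<beta> k) \<longlongrightarrow> 0) at_top"
    and bot: "((\<lambda>k. \<beta> (k + 1) - \<beta> k) \<longlongrightarrow> 0) at_bot"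
  shows "approx_inner (cov_deriv n \<beta>)"
  unfolding approx_inner_def
proof (intro exI conjI ballI allI)
  define x where "x j = op_mult (shift n) (diag (\<lambda>k. \<beta> (clamp (int j) k)))" for j
  show "x j \<in> Calg" for j
    unfolding x_def using eventually_const_clamp
    by (intro Calg.mult shift_Calg Calg.gen_diag has_finite_limits_if_eventually_const)
  fix a assume "a \<in> Alg0"
  then obtain F am where F: "finite F" and am: "\<forall>m\<in>F. eventually_const (am m)"
    and a: "a = (\<lambda>i j. \<Sum>m\<in>F. band m (am m) i j)"
    unfolding Alg0_def shift_mult_diag by blast
  define f where "f J m k = (\<beta> (k + m) - \<beta> (clamp J (k + m))) * am m k
      - am m (k + n) * (\<beta> k - \<beta> (clamp J k))" for J m k
  have "op_diff (cov_deriv n \<beta> a) (op_comm (x j) a) = (\<lambda>i i'. \<Sum>m\<in>F. band (m + n) (f (int j) m) i i')" for j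
    unfolding cov_deriv_def x_def shift_mult_diag op_comm_band_diff
    unfolding a op_comm_band_sum op_comm_band_band f_def ..
  moreover have "\<forall>\<^sub>F j in sequentially. \<forall>k. cmod (f (int j) m k) \<le> \<eta>" if "m \<in> F" "\<eta> > 0" for m \<eta>
  proof -
    have "\<forall>\<^sub>F J in at_top. \<forall>k. cmod (f J m k) \<le> \<eta>"
      unfolding f_def using am that by (intro eventually_clamp_commutator_coeff_le[OF top bot]) auto
    then show ?thesis
      by (rule eventually_compose_filterlim[OF _ filterlim_int_sequentially])
  qed
  ultimately show "((\<lambda>j. opnorm_sq (op_diff (cov_deriv n \<beta> a) (op_comm (x j) a))) \<longlongrightarrow> 0) sequentially"
    using opnorm_sq_sum_band_tendsto_0[OF F, where f="\<lambda>j. f (int j)" and s="\<lambda>m. m + n"] by simp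
qed

theorem mainTheorem10:
  fixes n :: int and \<beta> :: "int \<Rightarrow> complex"
  assumes "convergent_increments \<beta>"
  shows "approx_inner (cov_deriv n \<beta>) \<longleftrightarrow>
    (((\<lambda>k. \<beta> (k + 1) - \<beta> k) \<longlongrightarrow> 0) at_top \<and> ((\<lambda>k. \<beta> (k + 1) - \<beta> k) \<longlongrightarrow> 0) at_bot)"
  using increments_tendsto_0_if_approx_inner[OF assms] approx_inner_if_increments_tendsto_0 by blast

end
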